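(* Let $T_1,T_2$ be standard tableaux. If $T_1'$ is a term of $\mathbb B_2^{(0)}T_1$ and $T_2'$ is a term of $\mathbb B_2^{(1)}T_2$, then $\overset{*}{\mathbb B}{}_2^{(0)}T_1'=T_1$ and $\overset{*}{\mathbb B}{}_2^{(1)}T_2'=T_2$.
   Context: Tableaux (French convention: rows of lengths $\lambda_1\ge\lambda_2\ge\cdots$ from bottom to top). A tableau is identified with (shape, reading word), the reading word listing the entries row by row from top row to bottom row, each row left to right; word operators act on tableaux via reading words, keeping the shape. Standard tableau of degree $n$: rows increase left to right, columns increase upwards, entries $1,\dots,n$ each once. $T^t$ is the transpose (reflection of diagram and entries across the main diagonal). Word operators (compositions act right to left): $\tau_k$ adds $k$ to every letter; $r_{(ab\to cd)}$ applies to a word whose letters in $\{a,b\}$ are, left to right, exactly $a$ then $b$ (if $a=b$: exactly two occurrences of $a$), and replaces the first by $c$ and the second by $d$; $R_a$ deletes all letters (cells) equal to $a$; for a word with $(\mathrm{ev}_a,\mathrm{ev}_{a+1})\in\{(1,2),(2,1)\}$ ($\mathrm{ev}_i$ = number of occurrences of $i$), $\sigma_a$ replaces the subword of letters in $\{a,b\}$, $b=a+1$, in place, via $aab\leftrightarrow abb$, $aba\leftrightarrow bba$, $baa\leftrightarrow bab$. For a tableau $T$ of degree $n$, $A_{n+1,n+1}T$ is the sum of all tableaux obtained by adding two cells containing $n+1$ so that the new shape is a partition diagram and the two new cells lie in different columns. Operators and transposition extend linearly to $\mathbb Z$-linear combinations of tableaux. For standard $T$ of degree $n$: $\mathbb B_2^{(0)}T=\tau_1r_{(11\to01)}\sigma_1\sigma_2\cdots\sigma_nA_{n+1,n+1}T$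 and $\mathbb B_2^{(1)}T=(\mathbb B_2^{(0)}T^t)^t$ (sums of distinct standard tableaux). For a standard tableau $T$ of degree $n\ge2$ in which $1$ precedes $2$ in the reading word, $\overset{*}{\mathbb B}{}_2^{(0)}T=R_{n-1}\sigma_{n-2}\cdots\sigma_1r_{(01\to11)}\tau_{-1}T$; for a standard $T$ of degree $n\ge2$ in which $2$ precedes $1$, $\overset{*}{\mathbb B}{}_2^{(1)}T=(\overset{*}{\mathbb B}{}_2^{(0)}T^t)^t$. *)

theory Defs
  imports Main
begin

(* A tableau (French convention) is the list of its rows, bottom row first;
   each row is listed left to right.  Entries are integers. *)
type_synonym tab = "int list list"

definition partition_shape :: "tab \<Rightarrow> bool" where
  "partition_shape T \<longleftrightarrow> (\<forall>r\<in>set T. r \<noteq> []) \<and>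
     (\<forall>i. Suc i < length T \<longrightarrow> length (T ! Suc i) \<le> length (T ! i))"

definition rw :: "tab \<Rightarrow> int list" where
  "rw T = concat (rev T)"

definition deg :: "tab \<Rightarrow> nat" where
  "deg T = length (rw T)"

definition rowlen :: "tab \<Rightarrow> nat \<Rightarrow> nat" where
  "rowlen T i = (if i < length T then length (T ! i) else 0)"

definition standard :: "tab \<Rightarrow> bool" where
  "standard T \<longleftrightarrow> partition_shape T \<and>
     (\<forall>i<length T. sorted_wrt (<) (T ! i)) \<and>
     (\<forall>i j. Suc i < length T \<and> j < length (T ! Suc i) \<longrightarrow> T ! i ! j < T ! Suc i ! j) \<and>
     distinct (rw T) \<and> set (rw T) = {1 .. int (deg T)}"

definition transp_tab :: "tab \<Rightarrow> tab" where
  "transp_tab T = map (\<lambda>j. map (\<lambda>i. T ! i ! j) [0..< length (filter (\<lambda>r. j < length r) T)])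
       [0..< (if T = [] then 0 else length (hd T))]"

fun split_by :: "nat list \<Rightarrow> 'a list \<Rightarrow> 'a list list" where
  "split_by [] w = []"
| "split_by (l # ls) w = take l w # split_by ls (drop l w)"

(* the tableau of the same shape as T with reading word w *)
definition fill :: "tab \<Rightarrow> int list \<Rightarrow> tab" where
  "fill T w = rev (split_by (rev (map length T)) w)"

(* word operators; None = operator not applicable *)
definition tau :: "int \<Rightarrow> int list \<Rightarrow> int list option" where
  "tau k w = Some (map (\<lambda>x. x + k) w)"

fun rpl :: "int \<Rightarrow> int \<Rightarrow> int \<Rightarrow> int \<Rightarrow> int list \<Rightarrow> int list" where
  "rpl a b c d [] = []"
| "rpl a b c d (x # xs) = (if x = a \<or> x = b
      then c # map (\<lambda>y. if y = a \<or> y = b then d else y) xs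
      else x # rpl a b c d xs)"

definition rop :: "int \<Rightarrow> int \<Rightarrow> int \<Rightarrow> int \<Rightarrow> int list \<Rightarrow> int list option" where
  "rop a b c d w = (if filter (\<lambda>x. x = a \<or> x = b) w = [a, b] then Some (rpl a b c d w) else None)"

fun subst_in :: "(int \<Rightarrow> bool) \<Rightarrow> int list \<Rightarrow> int list \<Rightarrow> int list" where
  "subst_in P [] vs = []"
| "subst_in P (x # xs) vs = (if P x then hd vs # subst_in P xs (tl vs) else x # subst_in P xs vs)"

definition sig_sub :: "int \<Rightarrow> int list \<Rightarrow> int list" where
  "sig_sub a u = (let b = a + 1 in
     if u = [a,a,b] then [a,b,b] else if u = [a,b,b] then [a,a,b]
     else if u = [a,b,a] then [b,b,a] else if u = [b,b,a] then [a,b,a]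
     else if u = [b,a,a] then [b,a,b] else if u = [b,a,b] then [b,a,a] else u)"

definition ev :: "int \<Rightarrow> int list \<Rightarrow> nat" where
  "ev i w = length (filter (\<lambda>x. x = i) w)"

definition sigma :: "int \<Rightarrow> int list \<Rightarrow> int list option" where
  "sigma a w = (if (ev a w, ev (a + 1) w) \<in> {(1,2),(2,1)}
     then Some (subst_in (\<lambda>x. x = a \<or> x = a + 1) w (sig_sub a (filter (\<lambda>x. x = a \<or> x = a + 1) w)))
     else None)"

(* sigs_down k = sigma_1 \<circ> sigma_2 \<circ> ... \<circ> sigma_k  (sigma_k applied first) *)
fun sigs_down :: "nat \<Rightarrow> int list \<Rightarrow> int list option" where
  "sigs_down 0 w = Some w"
| "sigs_down (Suc k) w = Option.bind (sigma (int (Suc k)) w) (sigs_down k)"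

(* sigs_up k = sigma_k \<circ> ... \<circ> sigma_1  (sigma_1 applied first) *)
fun sigs_up :: "nat \<Rightarrow> int list \<Rightarrow> int list option" where
  "sigs_up 0 w = Some w"
| "sigs_up (Suc k) w = Option.bind (sigs_up k w) (sigma (int (Suc k)))"

definition Rdel :: "int \<Rightarrow> tab \<Rightarrow> tab" where
  "Rdel a T = filter (\<lambda>r. r \<noteq> []) (map (filter (\<lambda>x. x \<noteq> a)) T)"

(* terms of A_{n+1,n+1} T, n = deg T *)
definition Aterms :: "tab \<Rightarrow> tab set" where
  "Aterms T = {T'. partition_shape T' \<and> deg T' = deg T + 2 \<and> length T \<le> length T' \<and>
     (\<forall>i<length T. take (length (T ! i)) (T' ! i) = T ! i) \<and>
     (\<forall>i<length T'. \<forall>j<length (T' ! i). rowlen T i \<le> j \<longrightarrow> T' ! i ! j = int (deg T) + 1) \<and>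
     (\<forall>i1<length T'. \<forall>i2<length T'. \<forall>j.
        rowlen T i1 \<le> j \<and> j < length (T' ! i1) \<and> rowlen T i2 \<le> j \<and> j < length (T' ! i2)
        \<longrightarrow> i1 = i2)}"

definition B0 :: "tab \<Rightarrow> tab set" where
  "B0 T = {T''. \<exists>T'\<in>Aterms T. \<exists>w.
     Option.bind (sigs_down (deg T) (rw T')) (\<lambda>v. Option.bind (rop 1 1 0 1 v) (tau 1)) = Some w
     \<and> T'' = fill T' w}"

definition B1 :: "tab \<Rightarrow> tab set" where
  "B1 T = transp_tab ` B0 (transp_tab T)"

definition precedes :: "int \<Rightarrow> int \<Rightarrow> int list \<Rightarrow> bool" where
  "precedes a b w \<longleftrightarrow> (\<exists>i j. i < j \<and> j < length w \<and> w ! i = a \<and> w ! j = b)"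

(* starred B_2^(0); None if T is outside its domain *)
definition Bstar0 :: "tab \<Rightarrow> tab option" where
  "Bstar0 T = (if standard T \<and> 2 \<le> deg T \<and> precedes 1 2 (rw T)
     then map_option (\<lambda>w. Rdel (int (deg T) - 1) (fill T w))
       (Option.bind (Option.bind (tau (-1) (rw T)) (rop 0 1 1 1)) (sigs_up (deg T - 2)))
     else None)"

definition Bstar1 :: "tab \<Rightarrow> tab option" where
  "Bstar1 T = (if standard T \<and> 2 \<le> deg T \<and> precedes 2 1 (rw T)
     then map_option transp_tab (Bstar0 (transp_tab T)) else None)"

end

theory Submission
  imports Defs "HOL-Library.Multiset"
begin

text \<open>A term of \<open>A\<^sub>n\<^sub>+\<^sub>1\<^sub>,\<^sub>n\<^sub>+\<^sub>1 T\<close> is a semistandard tableau with content \<open>1, \<dots>, n + 1\<close>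
  in which \<open>n + 1\<close> occurs twice.  On a semistandard word whose only repeated letter is
  \<open>a + 1\<close>, the operator \<open>\<sigma>\<^sub>a\<close> turns one letter \<open>a + 1\<close> into \<open>a\<close>, keeps the word
  semistandard and is undone by \<open>\<sigma>\<^sub>a\<close>; so \<open>\<sigma>\<^sub>1 \<cdots> \<sigma>\<^sub>n\<close> reversibly pushes the repeated
  letter down to \<open>1\<close>.  Column strictness then puts both letters \<open>1\<close> in the first two cells of
  the bottom row, where \<open>\<tau>\<^sub>1 r\<^sub>(\<^sub>1\<^sub>1\<^sub>\<rightarrow>\<^sub>0\<^sub>1\<^sub>)\<close> makes them \<open>1 2\<close> and yields a standard tableau;
  \<open>r\<^sub>(\<^sub>0\<^sub>1\<^sub>\<rightarrow>\<^sub>1\<^sub>1\<^sub>) \<tau>\<^sub>-\<^sub>1\<close> undoes this.  The starred operator runs these steps backwards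
  and deletes the two added cells.  For \<open>\<bbbB>\<^sub>2\<^sup>(\<^sup>1\<^sup>)\<close> one transposes: the bottom row
  \<open>1 2\<close> becomes a first column, in which \<open>2\<close> is read before \<open>1\<close>.\<close>

section \<open>Reading words and cell positions\<close>

lemma map_length_split_by:
  "length w = sum_list ls \<Longrightarrow> map length (split_by ls w) = ls"
  by (induction ls arbitrary: w) (auto simp: min_def)

lemma concat_split_by:
  "length w = sum_list ls \<Longrightarrow> concat (split_by ls w) = w"
  by (induction ls arbitrary: w) auto

lemma split_by_map_length_concat: "split_by (map length xs) (concat xs) = xs"
  by (induction xs) auto

lemma deg_eq_sum_list: "deg T = sum_list (map length T)"
  by (simp add: deg_def rw_def length_concat rev_map[symmetric] sum_list_rev)

lemma map_length_fill: "length w = deg T \<Longrightarrow> map length (fill T w) = map length T"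
  unfolding fill_def
  by (simp add: map_length_split_by deg_eq_sum_list sum_list_rev flip: rev_map)

lemma rw_fill: "length w = deg T \<Longrightarrow> rw (fill T w) = w"
  unfolding fill_def rw_def by (simp add: concat_split_by deg_eq_sum_list sum_list_rev)

lemma fill_rw: "fill T (rw T) = T"
  unfolding fill_def rw_def by (metis rev_map rev_rev_ident split_by_map_length_concat)

lemma fill_cong: "map length A = map length B \<Longrightarrow> fill A w = fill B w"
  unfolding fill_def by simp

text \<open>Cell \<open>(i, j)\<close> is in row \<open>i\<close> counted from the bottom and column \<open>j\<close>; the rows above
  it are read first.\<close>

definition cell_pos :: "nat list \<Rightarrow> nat \<Rightarrow> nat \<Rightarrow> nat" where
  "cell_pos sh i j = sum_list (drop (Suc i) sh) + j"

definition shape_cells :: "nat list \<Rightarrow> (nat \<times> nat) set" where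
  "shape_cells sh = {(i, j). i < length sh \<and> j < sh ! i}"

lemma cell_pos_Suc: "cell_pos sh i (Suc j) = Suc (cell_pos sh i j)"
  by (simp add: cell_pos_def)

lemma sum_list_drop_antimono: "i \<le> i' \<Longrightarrow> sum_list (drop i' (sh :: nat list)) \<le> sum_list (drop i sh)"
proof -
  assume "i \<le> i'"
  then have "drop i' sh = drop (i' - i) (drop i sh)" by simp
  moreover have "sum_list (drop k ys) \<le> sum_list ys" for k and ys :: "nat list"
    by (metis append_take_drop_id le_add2 sum_list_append)
  ultimately show ?thesis by metis
qed

lemma cell_pos_less_sum_drop:
  "i < length sh \<Longrightarrow> j < sh ! i \<Longrightarrow> cell_pos sh i j < sum_list (drop i sh)"
  by (simp add: cell_pos_def Cons_nth_drop_Suc[symmetric])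

lemma cell_pos_less_sum_list: "i < length sh \<Longrightarrow> j < sh ! i \<Longrightarrow> cell_pos sh i j < sum_list sh"
  using cell_pos_less_sum_drop[of i sh j] sum_list_drop_antimono[of 0 i sh] by simp

lemma cell_pos_less_if_above:
  assumes "i' < i" "i < length sh" "j < sh ! i"
  shows "cell_pos sh i j < cell_pos sh i' j'"
proof -
  have "cell_pos sh i j < sum_list (drop i sh)" using assms cell_pos_less_sum_drop by simp
  also have "\<dots> \<le> sum_list (drop (Suc i') sh)" using assms sum_list_drop_antimono by simp
  also have "\<dots> \<le> cell_pos sh i' j'" by (simp add: cell_pos_def)
  finally show ?thesis .
qed

lemma cell_pos_less_iff:
  assumes "(i, j) \<in> shape_cells sh" "(i', j') \<in> shape_cells sh"
  shows "cell_pos sh i j < cell_pos sh i' j' \<longleftrightarrow> i' < i \<or> (i = i' \<and> j < j')"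
  using assms cell_pos_less_if_above[of i' i sh j j'] cell_pos_less_if_above[of i i' sh j' j]
  by (cases "i' < i"; cases "i < i'"; auto simp: shape_cells_def cell_pos_def)

lemma inj_on_cell_pos: "inj_on (\<lambda>(i, j). cell_pos sh i j) (shape_cells sh)"
proof (rule inj_onI, clarify)
  fix i j i' j'
  assume "(i, j) \<in> shape_cells sh" "(i', j') \<in> shape_cells sh" "cell_pos sh i j = cell_pos sh i' j'"
  then show "i = i' \<and> j = j'"
    using cell_pos_less_iff[of i j sh i' j'] cell_pos_less_iff[of i' j' sh i j]
    by (metis less_irrefl nat_neq_iff)
qed

lemma cell_pos_surj:
  "p < sum_list sh \<Longrightarrow> \<exists>i j. (i, j) \<in> shape_cells sh \<and> cell_pos sh i j = p"
proof (induction sh arbitrary: p)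
  case (Cons x sh)
  show ?case
  proof (cases "p < sum_list sh")
    case True
    then obtain i j where "(i, j) \<in> shape_cells sh" "cell_pos sh i j = p" using Cons.IH by blast
    then show ?thesis by (intro exI[of _ "Suc i"] exI[of _ j]) (auto simp: shape_cells_def cell_pos_def)
  next
    case False
    then show ?thesis using Cons.prems
      by (intro exI[of _ 0] exI[of _ "p - sum_list sh"]) (auto simp: shape_cells_def cell_pos_def)
  qed
qed simp

lemma bij_betw_cell_pos: "bij_betw (\<lambda>(i, j). cell_pos sh i j) (shape_cells sh) {..<sum_list sh}"
  unfolding bij_betw_def using inj_on_cell_pos cell_pos_surj[of _ sh] cell_pos_less_sum_list[of _ sh]
  by (fastforce simp: shape_cells_def)

lemma finite_shape_cells: "finite (shape_cells sh)"
  using bij_betw_cell_pos bij_betw_finite by blast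

lemma rw_nth:
  assumes "i < length T" "j < length (T ! i)"
  shows "rw T ! cell_pos (map length T) i j = T ! i ! j"
proof -
  have "T = take i T @ T ! i # drop (Suc i) T" using assms by (simp add: id_take_nth_drop)
  then have "rw T = concat (rev (drop (Suc i) T)) @ T ! i @ concat (rev (take i T))"
    unfolding rw_def by (metis append.assoc concat.simps(2) concat_append rev.simps(2) rev_append concat.simps(1) append_Nil2)
  moreover have "length (concat (rev (drop (Suc i) T))) = sum_list (drop (Suc i) (map length T))"
    by (simp add: length_concat sum_list_rev drop_map flip: rev_map)
  ultimately show ?thesis using assms by (simp add: cell_pos_def nth_append)
qed

abbreviation entry :: "tab \<Rightarrow> nat \<times> nat \<Rightarrow> int" where
  "entry T \<equiv> \<lambda>(i, j). T ! i ! j"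

abbreviation cells :: "tab \<Rightarrow> (nat \<times> nat) set" where
  "cells T \<equiv> shape_cells (map length T)"

lemma cells_iff: "(i, j) \<in> cells T \<longleftrightarrow> i < length T \<and> j < length (T ! i)"
  by (auto simp: shape_cells_def)

lemma rw_nth_cell_pos_comp:
  "x \<in> cells T \<Longrightarrow> (nth (rw T) \<circ> (\<lambda>(i, j). cell_pos (map length T) i j)) x = entry T x"
  by (cases x) (simp add: cells_iff rw_nth)

lemma cell_pos_image_cells: "(\<lambda>(i, j). cell_pos (map length T) i j) ` cells T = {..<length (rw T)}"
  using bij_betw_cell_pos[of "map length T"] by (simp add: bij_betw_def deg_eq_sum_list flip: deg_def)

lemma set_rw: "set (rw T) = entry T ` cells T"
proof -
  have "set (rw T) = nth (rw T) ` {..<length (rw T)}" by (auto simp: in_set_conv_nth)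
  also have "\<dots> = entry T ` cells T"
    unfolding cell_pos_image_cells[symmetric] image_comp using rw_nth_cell_pos_comp
    by (intro image_cong) auto
  finally show ?thesis .
qed

lemma distinct_rw_iff: "distinct (rw T) \<longleftrightarrow> inj_on (entry T) (cells T)"
proof -
  have "distinct (rw T) \<longleftrightarrow> inj_on (nth (rw T)) ((\<lambda>(i, j). cell_pos (map length T) i j) ` cells T)"
    by (auto simp: cell_pos_image_cells distinct_conv_nth inj_on_def)
  also have "\<dots> \<longleftrightarrow> inj_on (nth (rw T) \<circ> (\<lambda>(i, j). cell_pos (map length T) i j)) (cells T)"
    using comp_inj_on_iff[OF inj_on_cell_pos] by blast
  also have "\<dots> \<longleftrightarrow> inj_on (entry T) (cells T)" using rw_nth_cell_pos_comp by (intro inj_on_cong) auto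
  finally show ?thesis .
qed

lemma card_cells: "card (cells T) = deg T"
  using bij_betw_same_card[OF bij_betw_cell_pos[of "map length T"]] by (simp add: deg_eq_sum_list)

lemma mset_rw: "mset (rw T) = image_mset (entry T) (mset_set (cells T))"
proof -
  have "mset (rw T) = image_mset (nth (rw T)) (mset_set {..<length (rw T)})"
    by (metis map_nth mset_map mset_upt lessThan_atLeast0)
  also have "\<dots> = image_mset (nth (rw T) \<circ> (\<lambda>(i, j). cell_pos (map length T) i j)) (mset_set (cells T))"
    by (simp add: image_mset_mset_set[OF inj_on_cell_pos] flip: cell_pos_image_cells image_mset.comp)
  also have "\<dots> = image_mset (entry T) (mset_set (cells T))"
    using rw_nth_cell_pos_comp finite_shape_cells by (intro image_mset_cong) auto
  finally show ?thesis .
qed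

section \<open>Ranks in a filtered subsequence\<close>

definition filter_rank :: "('a \<Rightarrow> bool) \<Rightarrow> 'a list \<Rightarrow> nat \<Rightarrow> nat" where
  "filter_rank P w p = length (filter P (take p w))"

lemma length_subst_in: "length (subst_in P w vs) = length w"
  by (induction P w vs rule: subst_in.induct) auto

lemma nth_subst_in:
  "length vs = length (filter P w) \<Longrightarrow> p < length w \<Longrightarrow>
   subst_in P w vs ! p = (if P (w ! p) then vs ! filter_rank P w p else w ! p)"
proof (induction w arbitrary: vs p)
  case (Cons x xs)
  show ?case
  proof (cases p)
    case 0
    then show ?thesis using Cons.prems by (cases vs) (auto simp: filter_rank_def)
  next
    case (Suc p')
    then show ?thesis
      using Cons.IH[of "if P x then tl vs else vs" p'] Cons.prems
      by (cases vs) (auto simp: filter_rank_def)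
  qed
qed simp

lemma nth_filter_rank: "p < length w \<Longrightarrow> P (w ! p) \<Longrightarrow> filter P w ! filter_rank P w p = w ! p"
proof -
  assume p: "p < length w" "P (w ! p)"
  then have "filter P w = filter P (take p w) @ w ! p # filter P (drop (Suc p) w)"
    by (metis filter.simps(2) filter_append id_take_nth_drop)
  then show ?thesis by (simp add: filter_rank_def nth_append)
qed

lemma filter_rank_Suc:
  "p < length w \<Longrightarrow> filter_rank P w (Suc p) = filter_rank P w p + (if P (w ! p) then 1 else 0)"
  by (simp add: filter_rank_def take_Suc_conv_app_nth)

lemma filter_rank_mono: "p \<le> p' \<Longrightarrow> filter_rank P w p \<le> filter_rank P w p'"
  unfolding filter_rank_def
  by (metis append_take_drop_id filter_append le_add1 length_append min.absorb1 take_take)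

lemma filter_rank_strict_mono:
  "p < p' \<Longrightarrow> p' \<le> length w \<Longrightarrow> P (w ! p) \<Longrightarrow> filter_rank P w p < filter_rank P w p'"
  using filter_rank_Suc[of p w P] filter_rank_mono[of "Suc p" p' P w] by simp

lemma filter_rank_less_length:
  "p < length w \<Longrightarrow> P (w ! p) \<Longrightarrow> filter_rank P w p < length (filter P w)"
  using filter_rank_strict_mono[of p "length w" w P] by (simp add: filter_rank_def)

lemma filter_rank_inj:
  "p < length w \<Longrightarrow> p' < length w \<Longrightarrow> P (w ! p) \<Longrightarrow> P (w ! p') \<Longrightarrow>
   filter_rank P w p = filter_rank P w p' \<Longrightarrow> p = p'"
  by (metis filter_rank_strict_mono less_imp_le_nat less_irrefl nat_neq_iff)

lemma filter_rank_surj: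
  "k < length (filter P w) \<Longrightarrow> \<exists>q < length w. P (w ! q) \<and> filter_rank P w q = k"
proof (induction w arbitrary: k)
  case (Cons x xs)
  show ?case
  proof (cases "P x \<and> k = 0")
    case True
    then show ?thesis by (intro exI[of _ 0]) (auto simp: filter_rank_def)
  next
    case False
    then have "(if P x then k - 1 else k) < length (filter P xs)" using Cons.prems by auto
    then obtain q where "q < length xs" "P (xs ! q)" "filter_rank P xs q = (if P x then k - 1 else k)"
      using Cons.IH by blast
    then show ?thesis using False by (intro exI[of _ "Suc q"]) (auto simp: filter_rank_def)
  qed
qed simp

lemma filter_rank_between:
  assumes "q < p" "p < length w" "P (w ! p)" "filter_rank P w q < t" "t < filter_rank P w p"
  obtains q2 where "q < q2" "q2 < p" "w ! q2 = filter P w ! t"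
proof -
  have "t < length (filter P w)" using assms filter_rank_less_length[of p w P] by simp
  then obtain q2 where q2: "q2 < length w" "P (w ! q2)" "filter_rank P w q2 = t"
    using filter_rank_surj by blast
  have "q < q2" "q2 < p"
    using filter_rank_mono[of q2 q P w] filter_rank_mono[of p q2 P w] q2 assms by (meson not_le leD)+
  moreover have "w ! q2 = filter P w ! t" using nth_filter_rank[of q2 w P] q2 by simp
  ultimately show ?thesis using that by blast
qed

lemma subst_in_filter_update:
  assumes "q < length w" "P (w ! q)"
  shows "subst_in P w ((filter P w)[filter_rank P w q := x]) = w[q := x]"
proof (rule nth_equalityI)
  fix p assume "p < length (subst_in P w ((filter P w)[filter_rank P w q := x]))"
  then have p: "p < length w" by (simp add: length_subst_in)
  then show "subst_in P w ((filter P w)[filter_rank P w q := x]) ! p = w[q := x] ! p"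
    using assms nth_subst_in[of "(filter P w)[filter_rank P w q := x]" P w p]
      filter_rank_inj[of p w q P] filter_rank_less_length[of p w P] nth_filter_rank[of p w P]
    by (cases "p = q"; cases "P (w ! p)") (simp_all, metis nth_list_update_neq)
qed (simp add: length_subst_in)

lemma filter_list_update:
  assumes "q < length w" "P (w ! q)" "P x"
  shows "filter P (w[q := x]) = (filter P w)[filter_rank P w q := x]"
proof -
  have "w[q := x] = take q w @ x # drop (Suc q) w" using assms by (simp add: upd_conv_take_nth_drop)
  moreover have "filter P w = filter P (take q w) @ w ! q # filter P (drop (Suc q) w)"
    using assms by (metis filter.simps(2) filter_append id_take_nth_drop)
  ultimately show ?thesis using assms by (simp add: filter_rank_def list_update_append)
qed

lemma ev_eq_count: "ev i w = count (mset w) i"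
  by (induction w) (auto simp: ev_def)

lemma count_ge_2:
  assumes "p < length w" "p' < length w" "p \<noteq> p'" "w ! p = x" "w ! p' = x"
  shows "2 \<le> count (mset w) x"
proof -
  have "{p, p'} \<subseteq> {p. p < length w \<and> w ! p = x}" using assms by auto
  then have "card {p, p'} \<le> card {p. p < length w \<and> w ! p = x}" by (intro card_mono) auto
  then show ?thesis
    using assms by (simp add: count_mset count_list_eq_length_filter length_filter_conv_card eq_commute)
qed

section \<open>The operators \<open>\<sigma>\<^sub>a\<close>\<close>

lemma mset_eq_three_cases:
  assumes "mset [x, y, z] = {#a, b, b#}" "a \<noteq> b"
  shows "[x, y, z] = [a, b, b] \<or> [x, y, z] = [b, a, b] \<or> [x, y, z] = [b, b, a]"
proof -
  have "set [x, y, z] = {a, b}" using assms(1) by (metis set_mset_mset set_mset_add_mset_insert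
      set_mset_empty insert_absorb2 insert_commute)
  then have "x \<in> {a, b}" "y \<in> {a, b}" "z \<in> {a, b}" by auto
  moreover have "count (mset [x, y, z]) a = 1" using assms by simp
  ultimately show ?thesis using assms(2) by (auto split: if_splits)
qed

lemma sig_sub_lowers_one:
  fixes u :: "int list"
  assumes u: "mset u = {#a, a + 1, a + 1#}"
  obtains k where "k < length u" "u ! k = a + 1" "sig_sub a u = u[k := a]" "sig_sub a (u[k := a]) = u"
    "0 < k \<Longrightarrow> u ! (k - 1) \<noteq> a + 1"
    "\<And>t. k < t \<Longrightarrow> t < length u \<Longrightarrow> u ! t = a \<Longrightarrow> \<exists>t2. k < t2 \<and> t2 < t \<and> u ! t2 = a + 1"
proof -
  have "length u = 3" using u by (metis size_mset size_add_mset size_empty numeral_3_eq_3)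
  then obtain x y z where "u = [x, y, z]"
    by (metis (no_types) length_0_conv length_Suc_conv numeral_3_eq_3)
  then consider "u = [a, a + 1, a + 1]" | "u = [a + 1, a, a + 1]" | "u = [a + 1, a + 1, a]"
    using mset_eq_three_cases[of x y z a "a + 1"] u by auto
  then show ?thesis
  proof cases
    case 1
    then show ?thesis by (intro that[of 1]) (auto simp: sig_sub_def Let_def nth_Cons')
  next
    case 2
    then show ?thesis by (intro that[of 2]) (auto simp: sig_sub_def Let_def nth_Cons')
  next
    case 3
    have "\<exists>t2. 0 < t2 \<and> t2 < t \<and> u ! t2 = a + 1" if "0 < t" "t < length u" "u ! t = a" for t
    proof -
      have "t = 2" using that 3 by (cases t; cases "t - 1") auto
      then show ?thesis using 3 by (intro exI[of _ 1]) simp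
    qed
    then show ?thesis using 3 by (intro that[of 0]) (simp_all add: sig_sub_def Let_def)
  qed
qed

lemma sigma_lowers_one:
  fixes w :: "int list"
  assumes ca: "count (mset w) a = 1" and cb: "count (mset w) (a + 1) = 2"
  obtains q where "q < length w" "w ! q = a + 1"
    "sigma a w = Some (w[q := a])" "sigma a (w[q := a]) = Some w"
    "0 < q \<Longrightarrow> w ! (q - 1) \<noteq> a + 1"
    "\<And>p. q < p \<Longrightarrow> p < length w \<Longrightarrow> w ! p = a \<Longrightarrow> \<exists>p2. q < p2 \<and> p2 < p \<and> w ! p2 = a + 1"
proof -
  define P where "P = (\<lambda>x::int. x = a \<or> x = a + 1)"
  define u where "u = filter P w"
  have mu: "mset u = {#a, a + 1, a + 1#}"
    by (rule multiset_eqI) (use ca cb in \<open>auto simp: u_def P_def\<close>)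
  then have lu: "length u = 3" by (metis size_mset size_add_mset size_empty numeral_3_eq_3)
  obtain k where k: "k < length u" "u ! k = a + 1" "sig_sub a u = u[k := a]" "sig_sub a (u[k := a]) = u"
    "0 < k \<Longrightarrow> u ! (k - 1) \<noteq> a + 1"
    "\<And>t. k < t \<Longrightarrow> t < length u \<Longrightarrow> u ! t = a \<Longrightarrow> \<exists>t2. k < t2 \<and> t2 < t \<and> u ! t2 = a + 1"
    using sig_sub_lowers_one[OF mu] by blast
  obtain q where q: "q < length w" "P (w ! q)" "filter_rank P w q = k"
    using filter_rank_surj[of k P w] k(1) u_def by auto
  have wq: "w ! q = a + 1" using nth_filter_rank[of q w P] q k(2) u_def by simp
  have lower: "sigma a w = Some (w[q := a])"
    using ca cb subst_in_filter_update[of q w P a] q k(3)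
    by (simp add: sigma_def ev_eq_count flip: P_def u_def)
  have raise: "sigma a (w[q := a]) = Some w"
  proof -
    have "mset (w[q := a]) = add_mset a (mset w - {#a + 1#})" using q wq by (simp add: mset_update)
    then have "ev a (w[q := a]) = 2" "ev (a + 1) (w[q := a]) = 1" using ca cb by (simp_all add: ev_eq_count)
    moreover have "filter P (w[q := a]) = u[k := a]"
      using filter_list_update[of q w P a] q by (simp add: P_def u_def)
    moreover have "subst_in P (w[q := a]) ((u[k := a])[k := a + 1]) = w"
      using subst_in_filter_update[of q "w[q := a]" P "a + 1"] filter_list_update[of q w P a] q wq
      by (simp add: P_def u_def filter_rank_def) (metis list_update_id)
    ultimately show ?thesis using k(2,4) by (simp add: sigma_def flip: P_def) (metis list_update_id)
  qed
  have row: "w ! (q - 1) \<noteq> a + 1" if "0 < q"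
  proof
    assume h: "w ! (q - 1) = a + 1"
    then have "P (w ! (q - 1))" by (simp add: P_def)
    then have "filter_rank P w (q - 1) = k - 1" "0 < k"
      using filter_rank_Suc[of "q - 1" w P] that q by auto
    moreover have "q - 1 < length w" using q(1) by simp
    ultimately show False using nth_filter_rank[of "q - 1" w P] \<open>P (w ! (q - 1))\<close> h k(5) u_def by simp
  qed
  have column: "\<exists>p2. q < p2 \<and> p2 < p \<and> w ! p2 = a + 1"
    if p: "q < p" "p < length w" "w ! p = a" for p
  proof -
    have Pp: "P (w ! p)" using p by (simp add: P_def)
    then have "k < filter_rank P w p" "filter_rank P w p < length u" "u ! filter_rank P w p = a"
      using filter_rank_strict_mono[of q p w P] filter_rank_less_length[of p w P]
        nth_filter_rank[of p w P] p q u_def by auto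
    then obtain t where t: "k < t" "t < filter_rank P w p" "u ! t = a + 1" using k(6) by blast
    then obtain q2 where "q < q2" "q2 < p" "w ! q2 = u ! t"
      using filter_rank_between[of q p w P t] p(1,2) Pp t(1,2) q(3) unfolding u_def by blast
    then show ?thesis using t(3) by auto
  qed
  show ?thesis using that[OF q(1) wq lower raise row column] by blast
qed

section \<open>Semistandard words\<close>

definition semistandard_word :: "nat list \<Rightarrow> int list \<Rightarrow> bool" where
  "semistandard_word sh w \<longleftrightarrow>
     (\<forall>i j. i < length sh \<and> Suc j < sh ! i \<longrightarrow> w ! cell_pos sh i j \<le> w ! cell_pos sh i (Suc j)) \<and>
     (\<forall>i j. Suc i < length sh \<and> j < sh ! Suc i \<longrightarrow> w ! cell_pos sh i j < w ! cell_pos sh (Suc i) j)"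

lemma semistandard_word_row_mono:
  assumes "semistandard_word sh w" "i < length sh" "j \<le> j'" "j' < sh ! i"
  shows "w ! cell_pos sh i j \<le> w ! cell_pos sh i j'"
  using assms(3,4)
proof (induction j' rule: dec_induct)
  case (step j')
  then show ?case using assms(1,2) unfolding semistandard_word_def by (metis Suc_lessD order_trans)
qed simp

lemma cell_pos_between:
  assumes "Suc i < length sh" "cell_pos sh (Suc i) j < p" "p < cell_pos sh i j"
  obtains j2 where "j2 < j" "p = cell_pos sh i j2"
    | j2 where "j < j2" "j2 < sh ! Suc i" "p = cell_pos sh (Suc i) j2"
proof -
  define S where "S = sum_list (drop (Suc (Suc i)) sh)"
  have "sum_list (drop (Suc i) sh) = sh ! Suc i + S"
    using assms(1) by (simp add: S_def Cons_nth_drop_Suc[symmetric])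
  then have "cell_pos sh (Suc i) j = S + j" "cell_pos sh i j = S + sh ! Suc i + j"
    "\<And>j2. cell_pos sh (Suc i) j2 = S + j2" "\<And>j2. cell_pos sh i j2 = S + sh ! Suc i + j2"
    by (simp_all add: cell_pos_def S_def)
  then show ?thesis
    using assms that(1)[of "p - S - sh ! Suc i"] that(2)[of "p - S"] by (cases "p < S + sh ! Suc i") auto
qed

text \<open>The letters read between a cell and the cell below it lie in these two rows; a letter
  \<open>a + 1\<close> among them would force a second \<open>a\<close> in the lower row.\<close>

lemma semistandard_word_below_lowered:
  assumes sh: "sorted_wrt (\<ge>) sh" and len: "length w = sum_list sh" and ssw: "semistandard_word sh w"
    and ca: "count (mset w) a = 1"
    and column: "\<And>p. q < p \<Longrightarrow> p < length w \<Longrightarrow> w ! p = a \<Longrightarrow> \<exists>p2. q < p2 \<and> p2 < p \<and> w ! p2 = a + 1"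
    and ij: "Suc i < length sh" "j < sh ! Suc i" and q: "cell_pos sh (Suc i) j = q"
  shows "w ! cell_pos sh i j \<noteq> a"
proof
  assume below: "w ! cell_pos sh i j = a"
  have shi: "sh ! Suc i \<le> sh ! i" using sh ij by (simp add: sorted_wrt_iff_nth_less)
  have "q < cell_pos sh i j" using cell_pos_less_if_above[of i "Suc i" sh j j] ij q by simp
  moreover have "cell_pos sh i j < length w" using cell_pos_less_sum_list[of i sh j] ij shi len by simp
  ultimately obtain r where r: "q < r" "r < cell_pos sh i j" "w ! r = a + 1" using column below by blast
  then consider (left) j2 where "j2 < j" "r = cell_pos sh i j2"
    | (right) j2 where "j < j2" "j2 < sh ! Suc i" "r = cell_pos sh (Suc i) j2"
    using cell_pos_between ij q by blast
  then show False
  proof cases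
    case left
    have "w ! cell_pos sh i j2 \<le> w ! cell_pos sh i j"
      using semistandard_word_row_mono[OF ssw, of i j2 j] ij shi left(1) by simp
    then show False using left(2) r(3) below by simp
  next
    case right
    have j2: "j2 < sh ! i" using right(2) shi by simp
    have "w ! cell_pos sh i j2 < w ! cell_pos sh (Suc i) j2"
      using ssw ij right(2) unfolding semistandard_word_def by blast
    moreover have "w ! cell_pos sh i j \<le> w ! cell_pos sh i j2"
      using semistandard_word_row_mono[OF ssw, of i j j2] ij j2 right(1) by simp
    ultimately have "w ! cell_pos sh i j2 = a" using below r(3) right(3) by simp
    moreover have "cell_pos sh i j2 < length w" using cell_pos_less_sum_list[of i sh j2] ij j2 len by simp
    moreover have "cell_pos sh i j2 \<noteq> cell_pos sh i j" using right(1) by (simp add: cell_pos_def)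
    ultimately have "2 \<le> count (mset w) a"
      using count_ge_2[of "cell_pos sh i j2" w "cell_pos sh i j" a] below \<open>cell_pos sh i j < length w\<close>
      by simp
    then show False using ca by simp
  qed
qed

lemma semistandard_word_lower:
  assumes sh: "sorted_wrt (\<ge>) sh" and len: "length w = sum_list sh" and ssw: "semistandard_word sh w"
    and ca: "count (mset w) a = 1" and q: "q < length w" "w ! q = a + 1"
    and row: "0 < q \<Longrightarrow> w ! (q - 1) \<noteq> a + 1"
    and column: "\<And>p. q < p \<Longrightarrow> p < length w \<Longrightarrow> w ! p = a \<Longrightarrow> \<exists>p2. q < p2 \<and> p2 < p \<and> w ! p2 = a + 1"
  shows "semistandard_word sh (w[q := a])"
  unfolding semistandard_word_def
proof (intro conjI allI impI)
  fix i j assume ij: "i < length sh \<and> Suc j < sh ! i"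
  define p where "p = cell_pos sh i j"
  have "Suc p < length w"
    using cell_pos_less_sum_list[of i sh "Suc j"] ij len by (simp add: p_def cell_pos_Suc)
  moreover have "w ! p \<le> w ! Suc p"
    using ssw ij unfolding semistandard_word_def p_def by (metis cell_pos_Suc)
  moreover have "w ! p \<noteq> a + 1" if "Suc p = q" using row that by auto
  ultimately show "w[q := a] ! cell_pos sh i j \<le> w[q := a] ! cell_pos sh i (Suc j)"
    unfolding cell_pos_Suc p_def[symmetric] using q by (auto simp: nth_list_update)
next
  fix i j assume ij: "Suc i < length sh \<and> j < sh ! Suc i"
  define p1 where "p1 = cell_pos sh i j"
  define p2 where "p2 = cell_pos sh (Suc i) j"
  have "sh ! Suc i \<le> sh ! i" using sh ij by (simp add: sorted_wrt_iff_nth_less)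
  then have p1: "p1 < length w" using cell_pos_less_sum_list[of i sh j] ij len by (simp add: p1_def)
  have "p2 < p1" using cell_pos_less_if_above[of i "Suc i" sh j j] ij by (simp add: p1_def p2_def)
  moreover have "w ! p1 < w ! p2" using ssw ij unfolding semistandard_word_def p1_def p2_def by blast
  moreover have "w ! p1 \<noteq> a" if "p2 = q"
  proof -
    have "cell_pos sh (Suc i) j = q" using that by (simp add: p2_def)
    then show ?thesis
      unfolding p1_def using semistandard_word_below_lowered[OF sh len ssw ca column] ij by blast
  qed
  ultimately show "w[q := a] ! cell_pos sh i j < w[q := a] ! cell_pos sh (Suc i) j"
    unfolding p1_def[symmetric] p2_def[symmetric] using p1 q by (auto simp: nth_list_update)
qed

definition semistandard_doubled :: "int \<Rightarrow> int \<Rightarrow> nat list \<Rightarrow> int list \<Rightarrow> bool" where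
  "semistandard_doubled N m sh w \<longleftrightarrow>
     length w = sum_list sh \<and> semistandard_word sh w \<and> mset w = mset_set {1..N} + {#m#}"

text \<open>Each \<open>\<sigma>\<^sub>a\<close> moves the repeated letter from \<open>a + 1\<close> down to \<open>a\<close>.\<close>

lemma sigs_down_semistandard_doubled:
  assumes "sorted_wrt (\<ge>) sh" "semistandard_doubled N (int k + 1) sh w" "int k + 1 \<le> N"
  shows "\<exists>v. sigs_down k w = Some v \<and> semistandard_doubled N 1 sh v \<and> sigs_up k v = Some w"
  using assms(2,3)
proof (induction k arbitrary: w)
  case (Suc k)
  define a where "a = int (Suc k)"
  have ca: "count (mset w) a = 1" and cb: "count (mset w) (a + 1) = 2"
    using Suc.prems unfolding semistandard_doubled_def a_def by auto
  obtain q where q: "q < length w" "w ! q = a + 1" "sigma a w = Some (w[q := a])" "sigma a (w[q := a]) = Some w"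
    "0 < q \<Longrightarrow> w ! (q - 1) \<noteq> a + 1"
    "\<And>p. q < p \<Longrightarrow> p < length w \<Longrightarrow> w ! p = a \<Longrightarrow> \<exists>p2. q < p2 \<and> p2 < p \<and> w ! p2 = a + 1"
    using sigma_lowers_one[OF ca cb] by blast
  have "semistandard_word sh (w[q := a])"
    using semistandard_word_lower[OF assms(1) _ _ ca q(1,2,5,6)] Suc.prems unfolding semistandard_doubled_def by blast
  moreover have "mset (w[q := a]) = mset_set {1..N} + {#int k + 1#}"
    using q Suc.prems by (simp add: mset_update semistandard_doubled_def a_def)
  ultimately have "semistandard_doubled N (int k + 1) sh (w[q := a])"
    using Suc.prems unfolding semistandard_doubled_def by simp
  then obtain v where "sigs_down k (w[q := a]) = Some v" "semistandard_doubled N 1 sh v"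
    "sigs_up k v = Some (w[q := a])"
    using Suc.IH Suc.prems by fastforce
  then show ?case using q by (simp add: a_def)
qed simp

section \<open>Tableaux and the terms of \<open>A\<^sub>n\<^sub>+\<^sub>1\<^sub>,\<^sub>n\<^sub>+\<^sub>1\<close>\<close>

lemma partition_shape_sorted: "partition_shape T \<Longrightarrow> sorted_wrt (\<ge>) (map length T)"
  by (simp add: partition_shape_def sorted_wrt_iff_nth_Suc_transp)

lemma partition_shape_row_antimono:
  "partition_shape T \<Longrightarrow> i \<le> i' \<Longrightarrow> i' < length T \<Longrightarrow> length (T ! i') \<le> length (T ! i)"
  using partition_shape_sorted[of T] by (auto simp: sorted_wrt_iff_nth_less le_less)

lemma partition_shape_row_nonempty: "partition_shape T \<Longrightarrow> i < length T \<Longrightarrow> T ! i \<noteq> []"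
  by (auto simp: partition_shape_def)

lemma partition_shape_cong: "map length A = map length B \<Longrightarrow> partition_shape A = partition_shape B"
proof -
  assume m: "map length A = map length B"
  then have l: "length A = length B" by (metis length_map)
  have li: "i < length A \<Longrightarrow> length (A ! i) = length (B ! i)" for i using m l by (metis nth_map)
  have "(\<forall>r\<in>set A. r \<noteq> []) = (\<forall>r\<in>set B. r \<noteq> [])"
    using l li by (simp add: all_set_conv_all_nth flip: length_greater_0_conv)
  moreover have "(\<forall>i. Suc i < length A \<longrightarrow> length (A ! Suc i) \<le> length (A ! i)) =
    (\<forall>i. Suc i < length B \<longrightarrow> length (B ! Suc i) \<le> length (B ! i))"
    using l li by (metis Suc_lessD)
  ultimately show ?thesis unfolding partition_shape_def by simp
qed

lemma semistandard_word_rw_iff: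
  assumes "partition_shape T"
  shows "semistandard_word (map length T) (rw T) \<longleftrightarrow>
    (\<forall>i j. i < length T \<and> Suc j < length (T ! i) \<longrightarrow> T ! i ! j \<le> T ! i ! Suc j) \<and>
    (\<forall>i j. Suc i < length T \<and> j < length (T ! Suc i) \<longrightarrow> T ! i ! j < T ! Suc i ! j)"
    (is "_ \<longleftrightarrow> ?rows \<and> ?cols")
proof -
  have below: "j < length (T ! i)" if "Suc i < length T" "j < length (T ! Suc i)" for i j
    using partition_shape_row_antimono[OF assms, of i "Suc i"] that by simp
  let ?e = "\<lambda>i j. rw T ! cell_pos (map length T) i j"
  have "semistandard_word (map length T) (rw T) \<longleftrightarrow>
    (\<forall>i j. i < length T \<and> Suc j < length (T ! i) \<longrightarrow> ?e i j \<le> ?e i (Suc j)) \<and>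
    (\<forall>i j. Suc i < length T \<and> j < length (T ! Suc i) \<longrightarrow> ?e i j < ?e (Suc i) j)"
    unfolding semistandard_word_def by (simp cong: conj_cong)
  also have "\<dots> \<longleftrightarrow> ?rows \<and> ?cols"
  proof -
    have "?e i j = T ! i ! j \<and> ?e i (Suc j) = T ! i ! Suc j"
      if "i < length T" "Suc j < length (T ! i)" for i j
      using that rw_nth[of i T j] rw_nth[of i T "Suc j"] by simp
    moreover have "?e i j = T ! i ! j \<and> ?e (Suc i) j = T ! Suc i ! j"
      if "Suc i < length T" "j < length (T ! Suc i)" for i j
      using that below[OF that] rw_nth[of i T j] rw_nth[of "Suc i" T j] by simp
    ultimately show ?thesis by (smt (verit))
  qed
  finally show ?thesis .
qed

lemma standardI_semistandard_word:
  assumes ps: "partition_shape T" and ss: "semistandard_word (map length T) (rw T)"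
    and dist: "distinct (rw T)" and set: "set (rw T) = {1..int (deg T)}"
  shows "standard T"
proof -
  have "T ! i ! j < T ! i ! Suc j" if "i < length T" "Suc j < length (T ! i)" for i j
  proof -
    have "cell_pos (map length T) i (Suc j) < length (rw T)"
      using cell_pos_less_sum_list[of i "map length T" "Suc j"] that
      by (simp add: deg_eq_sum_list flip: deg_def)
    then have "rw T ! cell_pos (map length T) i j \<noteq> rw T ! cell_pos (map length T) i (Suc j)"
      using dist by (simp add: cell_pos_Suc nth_eq_iff_index_eq)
    then show ?thesis
      using ss that semistandard_word_rw_iff[OF ps] by (simp add: rw_nth order_less_le)
  qed
  then have "sorted_wrt (<) (T ! i)" if "i < length T" for i
    using that by (simp add: sorted_wrt_iff_nth_Suc_transp)
  then show ?thesis
    using ps ss dist set semistandard_word_rw_iff[OF ps] unfolding standard_def by blast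
qed

lemma standard_nth_bounds:
  assumes "standard T" "i < length T" "j < length (T ! i)"
  shows "1 \<le> T ! i ! j \<and> T ! i ! j \<le> int (deg T)"
proof -
  have "T ! i ! j \<in> set (rw T)" using assms(2,3) by (force simp: set_rw cells_iff)
  then show ?thesis using assms(1) unfolding standard_def by auto
qed

lemma AtermsD:
  assumes "T' \<in> Aterms T"
  shows "partition_shape T'" "deg T' = deg T + 2" "length T \<le> length T'"
    and "\<And>i. i < length T \<Longrightarrow> take (length (T ! i)) (T' ! i) = T ! i"
    and "\<And>i j. i < length T' \<Longrightarrow> j < length (T' ! i) \<Longrightarrow> rowlen T i \<le> j \<Longrightarrow> T' ! i ! j = int (deg T) + 1"
    and "\<And>i1 i2 j. i1 < length T' \<Longrightarrow> i2 < length T' \<Longrightarrow> rowlen T i1 \<le> j \<Longrightarrow> j < length (T' ! i1) \<Longrightarrow>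
      rowlen T i2 \<le> j \<Longrightarrow> j < length (T' ! i2) \<Longrightarrow> i1 = i2"
  using assms unfolding Aterms_def by blast+

lemma Aterms_old_cells:
  assumes "T' \<in> Aterms T" "i < length T"
  shows "length (T ! i) \<le> length (T' ! i)" "j < length (T ! i) \<Longrightarrow> T' ! i ! j = T ! i ! j"
proof -
  have tk: "take (length (T ! i)) (T' ! i) = T ! i" using AtermsD(4)[OF assms] .
  then have "length (take (length (T ! i)) (T' ! i)) = length (T ! i)" by simp
  then show "length (T ! i) \<le> length (T' ! i)" by (simp add: min_def split: if_splits)
  show "T' ! i ! j = T ! i ! j" if "j < length (T ! i)" using nth_take[OF that, of "T' ! i"] tk by simp
qed

lemma semistandard_word_Aterms:
  assumes std: "standard T" and A: "T' \<in> Aterms T"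
  shows "semistandard_word (map length T') (rw T')"
proof -
  note A' = AtermsD[OF A] and old_entry = Aterms_old_cells(2)[OF A]
  have psT: "partition_shape T" using std by (simp add: standard_def)
  have old: "i < length T \<and> j < length (T ! i)" if "j < rowlen T i" for i j
    using that by (auto simp: rowlen_def split: if_splits)
  have le_new: "T' ! i ! j \<le> int (deg T) + 1" if "i < length T'" "j < length (T' ! i)" for i j
  proof (cases "j < rowlen T i")
    case True
    then show ?thesis using old old_entry standard_nth_bounds[OF std, of i j] by force
  qed (use A'(5) that in simp)
  have rows: "T' ! i ! j \<le> T' ! i ! Suc j" if "i < length T'" "Suc j < length (T' ! i)" for i j
  proof (cases "Suc j < rowlen T i")
    case True
    then have "i < length T" "Suc j < length (T ! i)" using old by blast+
    moreover have "sorted_wrt (<) (T ! i)" using std \<open>i < length T\<close> by (simp add: standard_def)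
    ultimately show ?thesis using old_entry sorted_wrt_nth_less[of "(<)" "T ! i" j "Suc j"] by fastforce
  next
    case False
    then show ?thesis using A'(5) le_new that by simp
  qed
  have cols: "T' ! i ! j < T' ! Suc i ! j" if "Suc i < length T'" "j < length (T' ! Suc i)" for i j
  proof (cases "j < rowlen T (Suc i)")
    case True
    then have a: "Suc i < length T" "j < length (T ! Suc i)" using old by blast+
    then have "j < length (T ! i)" using partition_shape_row_antimono[OF psT, of i "Suc i"] by simp
    then show ?thesis using a old_entry std unfolding standard_def by (metis Suc_lessD)
  next
    case False
    then have up: "T' ! Suc i ! j = int (deg T) + 1" using A'(5) that by simp
    have j: "j < length (T' ! i)" using partition_shape_row_antimono[OF A'(1), of i "Suc i"] that by simp
    have "j < rowlen T i"
    proof (rule ccontr)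
      assume "\<not> j < rowlen T i"
      then have "i = Suc i" using A'(6)[of i "Suc i" j] that False j by simp
      then show False by simp
    qed
    then show ?thesis using old old_entry standard_nth_bounds[OF std, of i j] up by force
  qed
  show ?thesis using rows cols semistandard_word_rw_iff[OF A'(1)] by blast
qed

lemma mset_rw_Aterms:
  assumes std: "standard T" and A: "T' \<in> Aterms T"
  shows "mset (rw T') = mset_set {1..int (deg T) + 1} + {#int (deg T) + 1#}"
proof -
  note A' = AtermsD[OF A] and old = Aterms_old_cells[OF A]
  define new where "new = {(i, j). (i, j) \<in> cells T' \<and> rowlen T i \<le> j}"
  have cells: "cells T' = cells T \<union> new"
    using A'(3) old(1) by (auto simp: new_def cells_iff rowlen_def) (meson less_le_trans)
  have disj: "cells T \<inter> new = {}" by (auto simp: new_def cells_iff rowlen_def)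
  have fin: "finite new" using finite_shape_cells[of "map length T'"] cells by auto
  have "card new = 2"
    using card_Un_disjoint[OF finite_shape_cells fin disj] cells card_cells[of T'] card_cells[of T] A'(2)
    by simp
  have "mset (rw T') = image_mset (entry T') (mset_set (cells T)) + image_mset (entry T') (mset_set new)"
    by (simp add: mset_rw cells mset_set_Union[OF finite_shape_cells fin disj])
  also have "image_mset (entry T') (mset_set (cells T)) = mset (rw T)"
    unfolding mset_rw using old(2) finite_shape_cells by (intro image_mset_cong) (auto simp: cells_iff)
  also have "\<dots> = mset_set {1..int (deg T)}"
    using std unfolding standard_def by (metis mset_set_set)
  also have "image_mset (entry T') (mset_set new) = image_mset (\<lambda>_. int (deg T) + 1) (mset_set new)"
    using A'(5) fin by (intro image_mset_cong) (auto simp: new_def cells_iff)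
  also have "\<dots> = replicate_mset 2 (int (deg T) + 1)"
    using image_mset_const_eq[of "int (deg T) + 1" "mset_set new"] \<open>card new = 2\<close> by simp
  also have "mset_set {1..int (deg T)} + replicate_mset 2 (int (deg T) + 1)
    = mset_set {1..int (deg T) + 1} + {#int (deg T) + 1#}"
  proof -
    have "{1..int (deg T) + 1} = insert (int (deg T) + 1) {1..int (deg T)}" by auto
    then show ?thesis by (simp add: numeral_2_eq_2)
  qed
  finally show ?thesis .
qed

lemma Rdel_Aterms:
  assumes std: "standard T" and A: "T' \<in> Aterms T"
  shows "Rdel (int (deg T) + 1) T' = T"
proof -
  note A' = AtermsD[OF A]
  let ?keep = "filter (\<lambda>x. x \<noteq> int (deg T) + 1)"
  have old: "?keep (T ! i) = T ! i" if "i < length T" for i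
  proof -
    have "x \<le> int (deg T)" if "x \<in> set (T ! i)" for x
      using that standard_nth_bounds[OF std \<open>i < length T\<close>] by (auto simp: in_set_conv_nth)
    then show ?thesis by (force simp: filter_id_conv)
  qed
  have new: "?keep (drop (rowlen T i) (T' ! i)) = []" if "i < length T'" for i
    using A'(5)[OF that] by (auto simp: filter_empty_conv in_set_conv_nth)
  have "map ?keep T' = T @ replicate (length T' - length T) []"
  proof (rule nth_equalityI)
    fix i assume "i < length (map ?keep T')"
    then have i: "i < length T'" by simp
    show "map ?keep T' ! i = (T @ replicate (length T' - length T) []) ! i"
    proof (cases "i < length T")
      case True
      have "?keep (T' ! i) = ?keep (take (length (T ! i)) (T' ! i)) @ ?keep (drop (length (T ! i)) (T' ! i))"
        by (metis append_take_drop_id filter_append)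
      then have "?keep (T' ! i) = T ! i"
        using A'(4)[OF True] old[OF True] new[OF i] True by (simp add: rowlen_def)
      then show ?thesis using True i by (simp add: nth_append)
    next
      case False
      then show ?thesis using new[OF i] i by (simp add: nth_append rowlen_def)
    qed
  qed (use A'(3) in simp)
  then have "Rdel (int (deg T) + 1) T' = filter (\<lambda>r. r \<noteq> []) T" by (simp add: Rdel_def)
  also have "\<dots> = T" using std by (simp add: standard_def partition_shape_def filter_id_conv)
  finally show ?thesis .
qed

lemma Aterms_semistandard_doubled:
  "standard T \<Longrightarrow> T' \<in> Aterms T \<Longrightarrow>
   semistandard_doubled (int (deg T) + 1) (int (deg T) + 1) (map length T') (rw T')"
  by (simp add: semistandard_doubled_def semistandard_word_Aterms mset_rw_Aterms
      deg_eq_sum_list AtermsD(2) flip: deg_def)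

section \<open>Words with a doubled letter \<open>1\<close>\<close>

lemma set_semistandard_doubled:
  assumes "semistandard_doubled N m sh v" "m \<in> {1..N}"
  shows "set v = {1..N}"
proof -
  have "set v = set_mset (mset_set {1..N} + {#m#})"
    using assms(1) unfolding semistandard_doubled_def by (metis set_mset_mset)
  then show ?thesis using assms(2) by auto
qed

lemma semistandard_doubled_inj:
  assumes "semistandard_doubled N m sh v" "p < length v" "p' < length v" "v ! p = v ! p'" "v ! p \<noteq> m"
  shows "p = p'"
proof (rule ccontr)
  assume "p \<noteq> p'"
  then have "2 \<le> count (mset v) (v ! p)" using count_ge_2[OF assms(2,3) _ refl assms(4)[symmetric]] by blast
  moreover have "count (mset v) (v ! p) = count (mset_set {1..N}) (v ! p)"
    using assms(1,5) by (simp add: semistandard_doubled_def)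
  moreover have "count (mset_set {1..N}) (v ! p) \<le> 1" by (simp add: count_mset_set')
  ultimately show False by simp
qed

lemma semistandard_word_min_entry:
  assumes sh: "sorted_wrt (\<ge>) sh" and ss: "semistandard_word sh v" and len: "length v = sum_list sh"
    and ge: "\<And>p. p < length v \<Longrightarrow> m \<le> v ! p"
    and cell: "(i, j) \<in> shape_cells sh" and vm: "v ! cell_pos sh i j = m"
  shows "i = 0" and "j' \<le> j \<Longrightarrow> v ! cell_pos sh 0 j' = m"
proof -
  show i: "i = 0"
  proof (rule ccontr)
    assume "i \<noteq> 0"
    then obtain i' where i': "i = Suc i'" by (cases i) auto
    then have c: "Suc i' < length sh" "j < sh ! Suc i'" using cell by (auto simp: shape_cells_def)
    moreover have "sh ! Suc i' \<le> sh ! i'" using sh c(1) by (simp add: sorted_wrt_iff_nth_less)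
    ultimately have "cell_pos sh i' j < length v" using cell_pos_less_sum_list[of i' sh j] len by simp
    then have "m \<le> v ! cell_pos sh i' j" by (rule ge)
    moreover have "v ! cell_pos sh i' j < v ! cell_pos sh (Suc i') j"
      using ss c unfolding semistandard_word_def by blast
    ultimately show False using vm i' by simp
  qed
  show "v ! cell_pos sh 0 j' = m" if "j' \<le> j"
  proof -
    have j: "0 < length sh" "j < sh ! 0" using cell i by (simp_all add: shape_cells_def)
    then have "cell_pos sh 0 j' < length v" using cell_pos_less_sum_list[of 0 sh j'] that len by simp
    then have "m \<le> v ! cell_pos sh 0 j'" by (rule ge)
    moreover have "v ! cell_pos sh 0 j' \<le> v ! cell_pos sh 0 j"
      using semistandard_word_row_mono[OF ss j(1) that j(2)] .
    ultimately show ?thesis using vm i by simp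
  qed
qed

lemma card_ones_semistandard_doubled:
  assumes "semistandard_doubled N 1 sh v" "1 \<le> N"
  shows "card {p. p < length v \<and> v ! p = 1} = 2"
proof -
  have "card {p. p < length v \<and> v ! p = 1} = count (mset v) 1"
    by (simp add: ev_def length_filter_conv_card flip: ev_eq_count)
  also have "\<dots> = 2" using assms by (simp add: semistandard_doubled_def)
  finally show ?thesis .
qed

lemma semistandard_doubled_one_cell:
  assumes sh: "sorted_wrt (\<ge>) sh" and v: "semistandard_doubled N 1 sh v" and N: "1 \<le> N"
    and p: "p < length v" "v ! p = 1"
  shows "0 < length sh \<and> (\<exists>j \<le> 1. j < sh ! 0 \<and> p = cell_pos sh 0 j)"
proof -
  define S where "S = {p. p < length v \<and> v ! p = 1}"
  have len: "length v = sum_list sh" and ss: "semistandard_word sh v"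
    using v by (simp_all add: semistandard_doubled_def)
  have ge: "1 \<le> v ! p" if "p < length v" for p
    using set_semistandard_doubled[OF v] N nth_mem[OF that] by auto
  obtain i j where c: "(i, j) \<in> shape_cells sh" "cell_pos sh i j = p"
    using cell_pos_surj[of p sh] p len by auto
  then have vp: "v ! cell_pos sh i j = 1" using p by simp
  have i: "i = 0" using semistandard_word_min_entry(1)[OF sh ss len ge c(1) vp] .
  have "j \<le> 1"
  proof (rule ccontr)
    assume j: "\<not> j \<le> 1"
    have row: "v ! cell_pos sh 0 j' = 1" if "j' \<le> j" for j'
      using semistandard_word_min_entry(2)[OF sh ss len ge c(1) vp that] .
    have "{cell_pos sh 0 0, cell_pos sh 0 1, cell_pos sh 0 j} \<subseteq> S"
      using row[of 0] row[of 1] row[of j] j c i p by (auto simp: S_def cell_pos_def)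
    moreover have "finite S" by (simp add: S_def)
    ultimately have "card {cell_pos sh 0 0, cell_pos sh 0 1, cell_pos sh 0 j} \<le> card S"
      by (rule card_mono[rotated])
    then show False using card_ones_semistandard_doubled[OF v N] j by (simp add: S_def cell_pos_def)
  qed
  then show ?thesis using c i by (auto simp: shape_cells_def)
qed

text \<open>Column strictness forces both letters \<open>1\<close> into the bottom row, where they come first.\<close>

lemma semistandard_doubled_ones:
  assumes sh: "sorted_wrt (\<ge>) sh" and v: "semistandard_doubled N 1 sh v" and N: "1 \<le> N"
  shows "0 < length sh" "1 < sh ! 0"
    and "{p. p < length v \<and> v ! p = 1} = {cell_pos sh 0 0, Suc (cell_pos sh 0 0)}"
proof -
  define L where "L = cell_pos sh 0 0"
  define S where "S = {p. p < length v \<and> v ! p = 1}"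
  have in_S: "0 < length sh \<and> (\<exists>j \<le> 1. j < sh ! 0 \<and> p = L + j)" if "p \<in> S" for p
    using semistandard_doubled_one_cell[OF sh v N, of p] that by (simp add: S_def L_def cell_pos_def)
  have "S \<subseteq> {L, Suc L}"
  proof
    fix p assume "p \<in> S"
    then obtain j where "j \<le> 1" "p = L + j" using in_S by blast
    then show "p \<in> {L, Suc L}" by (cases j) auto
  qed
  then have S: "S = {L, Suc L}"
    using card_ones_semistandard_doubled[OF v N] by (intro card_subset_eq) (auto simp: S_def)
  then show "{p. p < length v \<and> v ! p = 1} = {cell_pos sh 0 0, Suc (cell_pos sh 0 0)}"
    by (simp add: S_def L_def)
  have "Suc L \<in> S" using S by simp
  then obtain j where "j \<le> 1" "j < sh ! 0" "Suc L = L + j" "0 < length sh" using in_S by blast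
  then show "0 < length sh" "1 < sh ! 0" by auto
qed

text \<open>This is \<open>\<tau>\<^sub>1 r\<^sub>(\<^sub>1\<^sub>1\<^sub>\<rightarrow>\<^sub>0\<^sub>1\<^sub>) v\<close> when the two letters \<open>1\<close> of \<open>v\<close> sit at \<open>L\<close> and \<open>L + 1\<close>.\<close>

definition lift_except :: "nat \<Rightarrow> int list \<Rightarrow> int list" where
  "lift_except L v = (map (\<lambda>x. x + 1) v)[L := 1]"

lemma length_lift_except [simp]: "length (lift_except L v) = length v"
  by (simp add: lift_except_def)

lemma nth_lift_except: "p < length v \<Longrightarrow> lift_except L v ! p = (if p = L then 1 else v ! p + 1)"
  by (simp add: lift_except_def nth_list_update)

lemma rpl_append: "\<forall>x\<in>set xs. x \<noteq> a \<and> x \<noteq> b \<Longrightarrow> rpl a b c d (xs @ ys) = xs @ rpl a b c d ys"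
  by (induction xs) auto

lemma rop_tau_lift_except:
  fixes v :: "int list"
  assumes L: "Suc L < length v" and ones: "v ! L = 1" "v ! Suc L = 1"
    and others: "\<And>p. p < length v \<Longrightarrow> p \<noteq> L \<Longrightarrow> p \<noteq> Suc L \<Longrightarrow> 2 \<le> v ! p"
  shows "Option.bind (rop 1 1 0 1 v) (tau 1) = Some (lift_except L v)"
    and "Option.bind (tau (-1) (lift_except L v)) (rop 0 1 1 1) = Some v"
proof -
  define xs where "xs = take L v"
  define zs where "zs = drop (Suc (Suc L)) v"
  have lx: "length xs = L" using L by (simp add: xs_def)
  have v: "v = xs @ 1 # 1 # zs"
    using L ones id_take_nth_drop[of L v] Cons_nth_drop_Suc[of "Suc L" v] by (simp add: xs_def zs_def)
  have "\<forall>x\<in>set xs. 2 \<le> x"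
    using others L by (auto simp: xs_def in_set_conv_nth)
  moreover have "\<forall>x\<in>set zs. 2 \<le> x"
    using others[of "Suc (Suc L) + _"] L by (auto simp: zs_def in_set_conv_nth)
  ultimately have big: "\<forall>x\<in>set xs. 2 \<le> x" "\<forall>x\<in>set zs. 2 \<le> x" by blast+
  then have no_small: "filter P xs = []" "filter P zs = []" if "P = (\<lambda>x. x = a \<or> x = b)" "a < 2" "b < 2" for P a b
    using that by (auto simp: filter_empty_conv)
  have avoid: "\<forall>x\<in>set xs. x \<noteq> a \<and> x \<noteq> b" if "a < 2" "b < 2" for a b using big that by force
  have lift: "lift_except L v = map (\<lambda>x. x + 1) xs @ 1 # 2 # map (\<lambda>x. x + 1) zs"
    unfolding lift_except_def v using lx by (simp add: list_update_append)
  have "rop 1 1 0 1 v = Some (xs @ 0 # 1 # zs)"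
    unfolding rop_def v using no_small[OF refl, of 1 1] by (simp add: rpl_append[OF avoid[of 1 1]])
  then show "Option.bind (rop 1 1 0 1 v) (tau 1) = Some (lift_except L v)"
    by (simp add: tau_def lift)
  have "tau (-1) (lift_except L v) = Some (xs @ 0 # 1 # zs)"
    by (simp add: tau_def lift o_def)
  moreover have "map (\<lambda>y. if y = 0 \<or> y = 1 then 1 else y) zs = zs" using big by (intro map_idI) auto
  then have "rop 0 1 1 1 (xs @ 0 # 1 # zs) = Some v"
    unfolding rop_def using no_small[OF refl, of 0 1] by (simp add: rpl_append[OF avoid[of 0 1]] v)
  ultimately show "Option.bind (tau (-1) (lift_except L v)) (rop 0 1 1 1) = Some v" by simp
qed

lemma lift_except_less:
  assumes "\<And>p. p < length v \<Longrightarrow> 1 \<le> v ! p" "v ! L = 1" "p1 < length v" "p2 < length v" "v ! p1 < v ! p2"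
  shows "lift_except L v ! p1 < lift_except L v ! p2"
  using assms(1)[of p1] assms(2-) by (auto simp: nth_lift_except)

lemma semistandard_word_lift_except:
  assumes sh: "sorted_wrt (\<ge>) sh" and v: "semistandard_doubled N 1 sh v" and N: "1 \<le> N"
  shows "semistandard_word sh (lift_except (cell_pos sh 0 0) v)"
proof -
  define L where "L = cell_pos sh 0 0"
  have len: "length v = sum_list sh" and ss: "semistandard_word sh v"
    using v by (simp_all add: semistandard_doubled_def)
  have ge: "1 \<le> v ! p" if "p < length v" for p
    using set_semistandard_doubled[OF v] N that by (auto dest: nth_mem)
  have ones: "p < length v \<and> v ! p = 1 \<longleftrightarrow> p = L \<or> p = Suc L" for p
    using semistandard_doubled_ones(3)[OF sh v N] by (auto simp: L_def set_eq_iff)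
  have vL: "v ! L = 1" using ones[of L] by simp
  have row: "lift_except L v ! p \<le> lift_except L v ! Suc p"
    if "Suc p < length v" "v ! p \<le> v ! Suc p" for p
  proof (cases "v ! p < v ! Suc p")
    case True
    then show ?thesis using lift_except_less[OF ge vL, of p "Suc p"] that by simp
  next
    case False
    then have "v ! p = v ! Suc p" using that by simp
    then have "v ! p = 1" using semistandard_doubled_inj[OF v, of p "Suc p"] that by fastforce
    then have "p = L" using ones[of p] ones[of "Suc p"] \<open>v ! p = v ! Suc p\<close> that by auto
    then show ?thesis using that ones[of "Suc p"] by (simp add: nth_lift_except)
  qed
  show ?thesis
    unfolding semistandard_word_def L_def[symmetric]
  proof (intro conjI allI impI)
    fix i j assume ij: "i < length sh \<and> Suc j < sh ! i"
    then show "lift_except L v ! cell_pos sh i j \<le> lift_except L v ! cell_pos sh i (Suc j)"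
      using row[of "cell_pos sh i j"] ss cell_pos_less_sum_list[of i sh "Suc j"] len
      unfolding semistandard_word_def by (simp add: cell_pos_Suc)
  next
    fix i j assume ij: "Suc i < length sh \<and> j < sh ! Suc i"
    moreover have "sh ! Suc i \<le> sh ! i" using sh ij by (simp add: sorted_wrt_iff_nth_less)
    ultimately have "j < sh ! i" by simp
    then show "lift_except L v ! cell_pos sh i j < lift_except L v ! cell_pos sh (Suc i) j"
      using lift_except_less[OF ge vL] ss ij cell_pos_less_sum_list[of i sh j]
        cell_pos_less_sum_list[of "Suc i" sh j] len unfolding semistandard_word_def by simp
  qed
qed

lemma mset_lift_except:
  assumes "mset v = mset_set {1..N} + {#1#}" "L < length v" "v ! L = 1" "0 \<le> N"
  shows "mset (lift_except L v) = mset_set {1..N + 1}"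
proof -
  have "image_mset (\<lambda>x. x + 1) (mset_set {1..N}) = mset_set ((\<lambda>x. x + 1) ` {1..N})"
    by (rule image_mset_mset_set) (simp add: inj_on_def)
  also have "(\<lambda>x. x + 1) ` {1..N} = {2..N + 1}" by (auto simp: image_iff algebra_simps)
  finally have "mset (map (\<lambda>x. x + 1) v) = mset_set {2..N + 1} + {#2#}" using assms(1) by simp
  then have "mset (lift_except L v) = add_mset 1 (mset_set {2..N + 1})"
    using assms(2,3) by (simp add: lift_except_def mset_update)
  also have "{1..N + 1} = insert 1 {2..N + 1}" using assms by auto
  then have "add_mset 1 (mset_set {2..N + 1}) = mset_set {1..N + 1}" by simp
  finally show ?thesis .
qed

section \<open>The terms of \<open>\<bbbB>\<^sub>2\<^sup>(\<^sup>0\<^sup>)\<close>\<close>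

lemma rop_tau_semistandard_doubled:
  assumes sh: "sorted_wrt (\<ge>) sh" and v: "semistandard_doubled N 1 sh v" and N: "1 \<le> N"
  shows "Option.bind (rop 1 1 0 1 v) (tau 1) = Some (lift_except (cell_pos sh 0 0) v)"
    and "Option.bind (tau (-1) (lift_except (cell_pos sh 0 0) v)) (rop 0 1 1 1) = Some v"
proof -
  define L where "L = cell_pos sh 0 0"
  have ones: "p < length v \<and> v ! p = 1 \<longleftrightarrow> p = L \<or> p = Suc L" for p
    using semistandard_doubled_ones(3)[OF sh v N] by (auto simp: L_def set_eq_iff)
  have "2 \<le> v ! p" if "p < length v" "p \<noteq> L" "p \<noteq> Suc L" for p
    using set_semistandard_doubled[OF v] N nth_mem[OF that(1)] ones[of p] that by auto
  then show "Option.bind (rop 1 1 0 1 v) (tau 1) = Some (lift_except (cell_pos sh 0 0) v)"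
    and "Option.bind (tau (-1) (lift_except (cell_pos sh 0 0) v)) (rop 0 1 1 1) = Some v"
    using rop_tau_lift_except[of L v] ones[of L] ones[of "Suc L"] by (simp_all add: L_def)
qed

lemma B0E:
  assumes std: "standard T" and X: "X \<in> B0 T"
  obtains T' v where "T' \<in> Aterms T" "semistandard_doubled (int (deg T) + 1) 1 (map length T') v"
    "sigs_up (deg T) v = Some (rw T')" "map length X = map length T'"
    "rw X = lift_except (cell_pos (map length T') 0 0) v"
proof -
  obtain T' w where T': "T' \<in> Aterms T"
    and w: "Option.bind (sigs_down (deg T) (rw T')) (\<lambda>v. Option.bind (rop 1 1 0 1 v) (tau 1)) = Some w"
    and X: "X = fill T' w"
    using X unfolding B0_def by blast
  have sh: "sorted_wrt (\<ge>) (map length T')" using partition_shape_sorted AtermsD(1)[OF T'] .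
  obtain v where v: "sigs_down (deg T) (rw T') = Some v"
    "semistandard_doubled (int (deg T) + 1) 1 (map length T') v" "sigs_up (deg T) v = Some (rw T')"
    using sigs_down_semistandard_doubled[OF sh Aterms_semistandard_doubled[OF std T']] by auto
  have "w = lift_except (cell_pos (map length T') 0 0) v"
    using w v(1) rop_tau_semistandard_doubled(1)[OF sh v(2)] by simp
  moreover have "length w = deg T'"
    using v(2) calculation by (simp add: semistandard_doubled_def deg_eq_sum_list)
  ultimately show ?thesis using that[OF T' v(2,3)] X map_length_fill rw_fill by simp
qed

lemma distinct_if_mset_eq_mset_set:
  assumes "mset w = mset_set A" "finite A"
  shows "distinct w" "set w = A"
proof -
  show "set w = A" using assms by (metis finite_set_mset_mset_set set_mset_mset)
  then have "count (mset w) a = (if a \<in> set w then 1 else 0)" for a using assms by (simp add: count_mset_set')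
  then show "distinct w" using distinct_count_atmost_1 by fastforce
qed

lemma standard_B0:
  assumes std: "standard T" and X: "X \<in> B0 T"
  shows "standard X"
proof -
  obtain T' v where T': "T' \<in> Aterms T" and v: "semistandard_doubled (int (deg T) + 1) 1 (map length T') v"
    and shape: "map length X = map length T'" and rwX: "rw X = lift_except (cell_pos (map length T') 0 0) v"
    using B0E[OF assms] by blast
  have sh: "sorted_wrt (\<ge>) (map length T')" using partition_shape_sorted AtermsD(1)[OF T'] .
  have "L < length v" "v ! L = 1" if "L = cell_pos (map length T') 0 0" for L
    using semistandard_doubled_ones(3)[OF sh v] that by auto
  then have "mset (rw X) = mset_set {1..int (deg T) + 2}"
    using mset_lift_except[of v "int (deg T) + 1"] v rwX by (simp add: semistandard_doubled_def)
  moreover have "deg X = deg T + 2" using shape AtermsD(2)[OF T'] by (simp add: deg_eq_sum_list)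
  ultimately have "distinct (rw X)" "set (rw X) = {1..int (deg X)}"
    using distinct_if_mset_eq_mset_set[of "rw X"] by auto
  moreover have "partition_shape X" using partition_shape_cong[OF shape] AtermsD(1)[OF T'] by simp
  moreover have "semistandard_word (map length X) (rw X)"
    using semistandard_word_lift_except[OF sh v] shape rwX by simp
  ultimately show ?thesis using standardI_semistandard_word by blast
qed

lemma B0_first_letters:
  assumes std: "standard T" and X: "X \<in> B0 T"
  defines "L \<equiv> cell_pos (map length X) 0 0"
  shows "Suc L < length (rw X)" "rw X ! L = 1" "rw X ! Suc L = 2"
proof -
  obtain T' v where T': "T' \<in> Aterms T" and v: "semistandard_doubled (int (deg T) + 1) 1 (map length T') v"
    and shape: "map length X = map length T'"
    and "rw X = lift_except (cell_pos (map length T') 0 0) v"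
    using B0E[OF assms(1,2)] by blast
  then have rwX: "rw X = lift_except L v" by (simp add: L_def)
  have sh: "sorted_wrt (\<ge>) (map length T')" using partition_shape_sorted AtermsD(1)[OF T'] .
  have ones: "p < length v \<and> v ! p = 1 \<longleftrightarrow> p = L \<or> p = Suc L" for p
    using semistandard_doubled_ones(3)[OF sh v] shape by (auto simp: L_def set_eq_iff)
  have "L < length v" "v ! L = 1" "Suc L < length v" "v ! Suc L = 1"
    using ones[of L] ones[of "Suc L"] by simp_all
  then show "Suc L < length (rw X)" "rw X ! L = 1" "rw X ! Suc L = 2"
    using rwX by (simp_all add: nth_lift_except)
qed

lemma B0_bottom_row:
  assumes "standard T" "X \<in> B0 T"
  shows "0 < length X" "1 < length (X ! 0)" "X ! 0 ! 0 = 1" "X ! 0 ! 1 = 2"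
proof -
  define L where "L = cell_pos (map length X) 0 0"
  have std: "standard X" using standard_B0[OF assms] .
  have "Suc L < sum_list (map length X)"
    using B0_first_letters(1)[OF assms] by (simp add: L_def deg_eq_sum_list flip: deg_def)
  then obtain i j where c: "(i, j) \<in> cells X" "cell_pos (map length X) i j = Suc L"
    using cell_pos_surj by blast
  have "i = 0 \<and> j = 1"
  proof -
    have "0 < length X"
      using c by (auto simp: shape_cells_def)
    then have "(0, 0) \<in> cells X"
      using partition_shape_row_nonempty[of X 0] std by (auto simp: standard_def shape_cells_def)
    then have "i = 0 \<and> 0 < j" using cell_pos_less_iff[OF _ c(1), of 0 0] c(2) by (simp add: L_def)
    then show ?thesis using c(2) by (simp add: L_def cell_pos_def)
  qed
  then show "0 < length X" "1 < length (X ! 0)" using c(1) by (auto simp: shape_cells_def)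
  then have "0 < length (X ! 0)" by linarith
  then show "X ! 0 ! 0 = 1" "X ! 0 ! 1 = 2"
    using \<open>0 < length X\<close> \<open>1 < length (X ! 0)\<close> B0_first_letters(2,3)[OF assms] rw_nth[of 0 X 0] rw_nth[of 0 X 1]
    by (simp_all add: cell_pos_Suc[of _ 0 0, simplified])
qed

lemma Bstar0_B0:
  assumes std: "standard T" and X: "X \<in> B0 T"
  shows "Bstar0 X = Some T"
proof -
  obtain T' v where T': "T' \<in> Aterms T" and v: "semistandard_doubled (int (deg T) + 1) 1 (map length T') v"
    and up: "sigs_up (deg T) v = Some (rw T')"
    and shape: "map length X = map length T'" and rwX: "rw X = lift_except (cell_pos (map length T') 0 0) v"
    using B0E[OF assms] by blast
  have sh: "sorted_wrt (\<ge>) (map length T')" using partition_shape_sorted AtermsD(1)[OF T'] .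
  have deg: "deg X = deg T + 2" using shape AtermsD(2)[OF T'] by (simp add: deg_eq_sum_list)
  have "precedes 1 2 (rw X)"
    unfolding precedes_def using B0_first_letters[OF assms] by blast
  moreover have "Option.bind (tau (-1) (rw X)) (rop 0 1 1 1) = Some v"
    using rop_tau_semistandard_doubled(2)[OF sh v] rwX by simp
  moreover have "fill X (rw T') = T'" using fill_cong[OF shape] fill_rw by simp
  ultimately have "Bstar0 X = Some (Rdel (int (deg T) + 1) T')"
    using standard_B0[OF assms] deg up by (simp add: Bstar0_def algebra_simps)
  then show ?thesis using Rdel_Aterms[OF std T'] by simp
qed

section \<open>Transposition\<close>

definition column_height :: "tab \<Rightarrow> nat \<Rightarrow> nat" where
  "column_height T j = length (filter (\<lambda>r. j < length r) T)"

lemma less_length_filter_iff_prefix_closed: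
  assumes "\<And>i k. i \<le> k \<Longrightarrow> k < length xs \<Longrightarrow> P (xs ! k) \<Longrightarrow> P (xs ! i)"
  shows "i < length (filter P xs) \<longleftrightarrow> i < length xs \<and> P (xs ! i)"
  using assms
proof (induction xs arbitrary: i)
  case (Cons x xs)
  have closed: "P (xs ! i)" if "i \<le> k" "k < length xs" "P (xs ! k)" for i k
    using Cons.prems[of "Suc i" "Suc k"] that by simp
  show ?case
  proof (cases "P x")
    case True
    then show ?thesis using Cons.IH[OF closed] by (cases i) auto
  next
    case False
    then have none: "\<not> P ((x # xs) ! k)" if "k < length (x # xs)" for k
      using Cons.prems[of 0 k] that by auto
    then have "filter P (x # xs) = []" by (metis filter_empty_conv in_set_conv_nth)
    then show ?thesis using none by auto
  qed
qed simp

lemma column_height_iff: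
  "partition_shape T \<Longrightarrow> i < column_height T j \<longleftrightarrow> i < length T \<and> j < length (T ! i)"
  unfolding column_height_def
  by (rule less_length_filter_iff_prefix_closed) (meson less_le_trans partition_shape_row_antimono)

lemma length_transp_tab: "length (transp_tab T) = (if T = [] then 0 else length (T ! 0))"
  by (simp add: transp_tab_def hd_conv_nth)

lemma nth_transp_tab:
  "j < length (transp_tab T) \<Longrightarrow> transp_tab T ! j = map (\<lambda>i. T ! i ! j) [0..<column_height T j]"
  by (simp add: transp_tab_def column_height_def)

lemma transp_tab_cell_iff:
  assumes ps: "partition_shape T"
  shows "j < length (transp_tab T) \<and> i < length (transp_tab T ! j) \<longleftrightarrow> i < length T \<and> j < length (T ! i)"
proof
  assume "j < length (transp_tab T) \<and> i < length (transp_tab T ! j)"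
  then show "i < length T \<and> j < length (T ! i)" using nth_transp_tab[of j T] column_height_iff[OF ps] by simp
next
  assume a: "i < length T \<and> j < length (T ! i)"
  then have "j < length (T ! 0)" using partition_shape_row_antimono[OF ps, of 0 i] by simp
  then have "j < length (transp_tab T)" using a by (auto simp: length_transp_tab)
  then show "j < length (transp_tab T) \<and> i < length (transp_tab T ! j)"
    using nth_transp_tab[of j T] column_height_iff[OF ps] a by simp
qed

lemma transp_tab_nth_nth:
  "partition_shape T \<Longrightarrow> i < length T \<Longrightarrow> j < length (T ! i) \<Longrightarrow> transp_tab T ! j ! i = T ! i ! j"
  using transp_tab_cell_iff[of T j i] nth_transp_tab[of j T] by simp

lemma cells_transp_tab: "partition_shape T \<Longrightarrow> cells (transp_tab T) = prod.swap ` cells T"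
proof (intro set_eqI iffI)
  fix x assume "partition_shape T" "x \<in> cells (transp_tab T)"
  then show "x \<in> prod.swap ` cells T" using transp_tab_cell_iff[of T "fst x" "snd x"]
    by (cases x) (auto simp: cells_iff image_iff intro!: bexI[of _ "(snd x, fst x)"])
next
  fix x assume "partition_shape T" "x \<in> prod.swap ` cells T"
  then show "x \<in> cells (transp_tab T)" using transp_tab_cell_iff[of T "fst x" "snd x"] by (auto simp: cells_iff)
qed

lemma deg_transp_tab: "partition_shape T \<Longrightarrow> deg (transp_tab T) = deg T"
  using card_cells[of T] card_cells[of "transp_tab T"] cells_transp_tab[of T]
    card_image[of prod.swap "cells T"] by simp

lemma partition_shape_transp_tab:
  assumes ps: "partition_shape T"
  shows "partition_shape (transp_tab T)"
  unfolding partition_shape_def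
proof (intro conjI allI impI ballI)
  fix r assume "r \<in> set (transp_tab T)"
  then obtain j where j: "j < length (transp_tab T)" "r = transp_tab T ! j" by (metis in_set_conv_nth)
  then have "T \<noteq> []" "j < length (T ! 0)" by (auto simp: length_transp_tab split: if_splits)
  then show "r \<noteq> []" using transp_tab_cell_iff[OF ps, of j 0] j by auto
next
  fix j assume j: "Suc j < length (transp_tab T)"
  have "i < length (transp_tab T ! j)" if "i < length (transp_tab T ! Suc j)" for i
    using transp_tab_cell_iff[OF ps, of "Suc j" i] transp_tab_cell_iff[OF ps, of j i] that j by simp
  then show "length (transp_tab T ! Suc j) \<le> length (transp_tab T ! j)" using not_le by blast
qed

lemma transp_tab_transp_tab:
  assumes ps: "partition_shape T"
  shows "transp_tab (transp_tab T) = T"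
proof -
  have ps': "partition_shape (transp_tab T)" by (rule partition_shape_transp_tab[OF ps])
  have len: "length (transp_tab (transp_tab T)) = length T"
  proof (cases "T = []")
    case False
    then have "0 < length (T ! 0)" using partition_shape_row_nonempty[OF ps, of 0] by simp
    then have "0 < length (transp_tab T)" using False by (simp add: length_transp_tab)
    then have "transp_tab T \<noteq> []" by auto
    moreover have "i < length (transp_tab T ! 0) \<longleftrightarrow> i < length T" for i
      using transp_tab_cell_iff[OF ps, of 0 i] partition_shape_row_nonempty[OF ps, of i] calculation by auto
    then have "length (transp_tab T ! 0) = length T" by (meson linorder_neqE_nat less_irrefl)
    ultimately show ?thesis by (simp add: length_transp_tab)
  qed (simp add: transp_tab_def)
  show ?thesis
  proof (rule nth_equalityI)
    fix i assume "i < length (transp_tab (transp_tab T))"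
    then have i: "i < length T" using len by simp
    have "j < column_height (transp_tab T) i \<longleftrightarrow> j < length (T ! i)" for j
      using column_height_iff[OF ps', of j i] transp_tab_cell_iff[OF ps, of j i] i by auto
    then have "column_height (transp_tab T) i = length (T ! i)" by (meson linorder_neqE_nat less_irrefl)
    then have "transp_tab (transp_tab T) ! i = map (\<lambda>j. transp_tab T ! j ! i) [0..<length (T ! i)]"
      using nth_transp_tab[of i "transp_tab T"] len i by simp
    also have "\<dots> = map (\<lambda>j. T ! i ! j) [0..<length (T ! i)]" using transp_tab_nth_nth[OF ps i] by simp
    also have "\<dots> = T ! i" by (simp add: map_nth)
    finally show "transp_tab (transp_tab T) ! i = T ! i" .
  qed (rule len)
qed

lemma standard_transp_tab:
  assumes std: "standard T"
  shows "standard (transp_tab T)"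
proof -
  have ps: "partition_shape T" using std by (simp add: standard_def)
  have cells: "cells (transp_tab T) = prod.swap ` cells T" by (rule cells_transp_tab[OF ps])
  have swap: "(entry (transp_tab T) \<circ> prod.swap) x = entry T x" if "x \<in> cells T" for x
    using transp_tab_nth_nth[OF ps] that by (cases x) (auto simp: cells_iff)
  have "set (rw (transp_tab T)) = (entry (transp_tab T) \<circ> prod.swap) ` cells T"
    by (simp add: set_rw cells image_comp)
  also have "\<dots> = set (rw T)" unfolding set_rw using swap by (rule image_cong[OF refl])
  finally have "set (rw (transp_tab T)) = set (rw T)" .
  moreover have "distinct (rw (transp_tab T))"
  proof -
    have "inj_on (entry T) (cells T)" using std distinct_rw_iff by (simp add: standard_def)
    then have "inj_on (entry (transp_tab T) \<circ> prod.swap) (cells T)" using swap inj_on_cong by blast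
    moreover have "inj_on prod.swap (cells T)" by (rule inj_onI) auto
    ultimately have "inj_on (entry (transp_tab T)) (prod.swap ` cells T)" using comp_inj_on_iff by blast
    then show ?thesis using distinct_rw_iff cells by simp
  qed
  moreover have "sorted_wrt (<) (transp_tab T ! j)" if j: "j < length (transp_tab T)" for j
  proof -
    have "transp_tab T ! j ! i < transp_tab T ! j ! Suc i" if i: "Suc i < length (transp_tab T ! j)" for i
    proof -
      have a: "Suc i < length T" "j < length (T ! Suc i)" using transp_tab_cell_iff[OF ps, of j "Suc i"] j i by auto
      then have "j < length (T ! i)" using partition_shape_row_antimono[OF ps, of i "Suc i"] by simp
      then show ?thesis using transp_tab_nth_nth[OF ps] a std unfolding standard_def by (simp add: Suc_lessD)
    qed
    then show ?thesis by (simp add: sorted_wrt_iff_nth_Suc_transp)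
  qed
  moreover have "transp_tab T ! j ! i < transp_tab T ! Suc j ! i"
    if "Suc j < length (transp_tab T)" "i < length (transp_tab T ! Suc j)" for j i
  proof -
    have a: "i < length T" "Suc j < length (T ! i)" using transp_tab_cell_iff[OF ps, of "Suc j" i] that by auto
    have "sorted_wrt (<) (T ! i)" using std a unfolding standard_def by blast
    then have "T ! i ! j < T ! i ! Suc j" using a sorted_wrt_nth_less by fastforce
    then show ?thesis using transp_tab_nth_nth[OF ps] a by simp
  qed
  ultimately show ?thesis
    using partition_shape_transp_tab[OF ps] deg_transp_tab[OF ps] std unfolding standard_def by simp
qed

lemma Bstar1_B1:
  assumes std: "standard T" and X: "X \<in> B1 T"
  shows "Bstar1 X = Some T"
proof -
  obtain Y where Y: "Y \<in> B0 (transp_tab T)" and XY: "X = transp_tab Y"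
    using X unfolding B1_def by blast
  have stdT: "standard (transp_tab T)" using standard_transp_tab[OF std] .
  have stdY: "standard Y" using standard_B0[OF stdT Y] .
  then have psY: "partition_shape Y" by (simp add: standard_def)
  have stdX: "standard X" using standard_transp_tab[OF stdY] XY by simp
  have row: "0 < length Y" "1 < length (Y ! 0)" "Y ! 0 ! 0 = 1" "Y ! 0 ! 1 = 2"
    using B0_bottom_row[OF stdT Y] by simp_all
  have cells: "(1, 0) \<in> cells X" "(0, 0) \<in> cells X"
    using transp_tab_cell_iff[OF psY, of 1 0] transp_tab_cell_iff[OF psY, of 0 0] row XY
    by (auto simp: cells_iff)
  have ent: "X ! 0 ! 0 = 1" "X ! 1 ! 0 = 2"
  proof -
    have "Y ! 0 \<noteq> []" using row(2) by (cases "Y ! 0") auto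
    then show "X ! 0 ! 0 = 1" "X ! 1 ! 0 = 2" using transp_tab_nth_nth[OF psY row(1)] row XY by simp_all
  qed
  have "length (Y ! 0) \<le> deg Y" using elem_le_sum_list[of 0 "map length Y"] row by (simp add: deg_eq_sum_list)
  then have "2 \<le> deg X" using row deg_transp_tab[OF psY] XY by simp
  moreover have "precedes 2 1 (rw X)"
  proof -
    let ?pos = "cell_pos (map length X)"
    have "?pos 1 0 < ?pos 0 0" "?pos 0 0 < length (rw X)"
      using cell_pos_less_iff[OF cells] cell_pos_less_sum_list[of 0 "map length X" 0] cells(2)
      by (auto simp: cells_iff deg_eq_sum_list simp flip: deg_def)
    moreover have "rw X ! ?pos 1 0 = 2" "rw X ! ?pos 0 0 = 1"
      using rw_nth cells ent by (auto simp: cells_iff)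
    ultimately show ?thesis unfolding precedes_def by blast
  qed
  ultimately have "Bstar1 X = map_option transp_tab (Bstar0 Y)"
    using stdX transp_tab_transp_tab[OF psY] XY by (simp add: Bstar1_def)
  then show ?thesis using Bstar0_B0[OF stdT Y] transp_tab_transp_tab std by (simp add: standard_def)
qed

theorem mainTheorem13:
  fixes T1 T2 T1' T2' :: tab
  assumes "standard T1" and "standard T2"
    and "T1' \<in> B0 T1" and "T2' \<in> B1 T2"
  shows "Bstar0 T1' = Some T1 \<and> Bstar1 T2' = Some T2"
  using Bstar0_B0[OF assms(1,3)] Bstar1_B1[OF assms(2,4)] by simp

end
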